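(* Let $m,k\in\mathbb{N}$ and let $\alpha\in\mathbb{C}$ with $\alpha,\ 1+\alpha+2m+k,\ 1+\alpha+2m\notin\mathbb{Z}_0^-$. Then \[ {}_3F_2\left[\begin{array}{r} -2m,\ \alpha,\ 1+\alpha+2m+k;\\ -2m-k,\ 1+\alpha+2m;\end{array}1\right]_{2m}=\frac{(1+\alpha)_{2m}\left(1+\frac{\alpha}{2}+k\right)_{2m}}{\left(1+\frac{\alpha}{2}\right)_{2m}(1+k)_{2m}}. \]
   Context: $\mathbb{N}=\{1,2,3,\dots\}$, $\mathbb{Z}_0^-=\{0,-1,-2,\dots\}$. For $a\in\mathbb{C}$ and $n\in\mathbb{N}_0$, $(a)_0=1$ and $(a)_n=a(a+1)\cdots(a+n-1)$. For $N\in\mathbb{N}_0$, ${}_3F_2\left[\begin{array}{r} a_1,a_2,a_3;\\ b_1,b_2;\end{array}z\right]_N=\sum_{n=0}^{N}\frac{(a_1)_n(a_2)_n(a_3)_n}{(b_1)_n(b_2)_n}\frac{z^n}{n!}$ (the sum of the first $N+1$ terms), defined whenever $(b_1)_n(b_2)_n\neq0$ for $0\le n\le N$. *)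

theory Defs
  imports "HOL-Analysis.Analysis"
begin

definition hyp3F2_trunc ::
  "complex \<Rightarrow> complex \<Rightarrow> complex \<Rightarrow> complex \<Rightarrow> complex \<Rightarrow> complex \<Rightarrow> nat \<Rightarrow> complex" where
  "hyp3F2_trunc a1 a2 a3 b1 b2 z N =
     (\<Sum>n=0..N. pochhammer a1 n * pochhammer a2 n * pochhammer a3 n
        / (pochhammer b1 n * pochhammer b2 n) * z ^ n / of_nat (fact n))"

end

theory Submission
  imports Defs
begin

text \<open>Multiplying the n-th term of the sum by the n-independent factor \<open>(N+k)! (1+x+N)\<^sub>k\<close>
  gives a term \<open>a\<^sub>k(n)\<close> without denominators. As Zeilberger's algorithm finds, the sums
  \<open>S\<^sub>k = \<Sum>\<^sub>n a\<^sub>k(n)\<close> satisfy a first-order recurrence in k,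
  \<open>(1+x/2+k) S\<^sub>k\<^sub>+\<^sub>1 = (k+1)(1+x+N+k)(1+x/2+N+k) S\<^sub>k\<close>, certified by an
  explicit rational antidifference in n. At \<open>k = 0\<close> the sum is \<open>(1+x)\<^sub>N\<close> by the
  parallel summation formula, so \<open>S\<^sub>k\<close> is a product of Pochhammer symbols, and the
  identity holds for every N and k, not only for even N.\<close>

lemma fact_mult_pochhammer_of_nat:
  "fact a * pochhammer (of_nat a + 1 :: 'a::{comm_semiring_1,semiring_char_0}) b = fact (a + b)"
  by (simp add: pochhammer_fact pochhammer_product' add.commute)

lemma pochhammer_minus_of_nat:
  assumes "n \<le> N"
  shows "pochhammer (- of_nat N :: 'a::field_char_0) n = (- 1) ^ n * fact N / fact (N - n)"
proof -
  have "fact (N - n) * pochhammer (of_nat N - of_nat n + 1 :: 'a) n = fact N"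
    using fact_mult_pochhammer_of_nat[of "N - n" n, where 'a='a] assms by simp
  then show ?thesis
    by (simp add: pochhammer_minus field_simps)
qed

lemma sum_pochhammer_div_fact:
  "(\<Sum>n=0..N. pochhammer (x :: 'a::field_char_0) n / fact n) = pochhammer (x + 1) N / fact N"
  using gbinomial_parallel_sum[of "x - 1" N]
  by (simp add: gbinomial_pochhammer' atLeast0AtMost algebra_simps)

lemma pochhammer_product_swap:
  "pochhammer z k * pochhammer (z + of_nat k) n = pochhammer z n * pochhammer (z + of_nat n) k"
  by (metis pochhammer_product' add.commute)

text \<open>Up to the factor \<open>(N+k)! (1+x+N)\<^sub>k\<close>, the n-th term of the truncated sum.\<close>
definition scaled_term :: "nat \<Rightarrow> nat \<Rightarrow> 'a::field_char_0 \<Rightarrow> nat \<Rightarrow> 'a" where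
  "scaled_term N k x n = of_nat (N choose n) * fact (N + k - n) * pochhammer x n
      * pochhammer (1 + x + of_nat N + of_nat n) k"

lemma scaled_term_Suc_index:
  assumes "n < N"
  shows "scaled_term N k x (Suc n) * (of_nat (Suc n) * (of_nat N + of_nat k - of_nat n) * (x + of_nat N + of_nat n + 1))
       = scaled_term N k x n * ((of_nat N - of_nat n) * (x + of_nat n) * (x + of_nat N + of_nat n + 1 + of_nat k))"
proof -
  have binom: "of_nat (N choose Suc n) * of_nat (Suc n) = of_nat (N choose n) * (of_nat N - (of_nat n :: 'a))"
    using binomial_absorb_comp[of N n] binomial_absorption[of n N] assms
    by (metis of_nat_diff of_nat_mult less_imp_le mult.commute)
  have fact: "fact (N + k - n) = (of_nat N + of_nat k - of_nat n) * (fact (N + k - Suc n) :: 'a)"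
    using fact_reduce[of "N + k - n", where 'a='a] assms by (simp add: of_nat_diff[of n "N + k"])
  have poch: "(x + of_nat N + of_nat n + 1) * pochhammer (1 + x + of_nat N + of_nat (Suc n)) k
      = pochhammer (1 + x + of_nat N + of_nat n) k * (x + of_nat N + of_nat n + 1 + of_nat k)"
    using pochhammer_rec[of "1 + x + of_nat N + of_nat n" k] pochhammer_Suc[of "1 + x + of_nat N + of_nat n" k]
    by (simp add: algebra_simps)
  show ?thesis
    unfolding scaled_term_def pochhammer_Suc fact
    using binom poch by algebra
qed

lemma scaled_term_Suc_param:
  assumes "n \<le> N"
  shows "scaled_term N (Suc k) x n
       = scaled_term N k x n * (of_nat N + of_nat k + 1 - of_nat n) * (1 + x + of_nat N + of_nat n + of_nat k)"
proof -
  have "fact (N + Suc k - n) = (of_nat N + of_nat k + 1 - of_nat n) * (fact (N + k - n) :: 'a)"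
    using assms by (simp add: Suc_diff_le of_nat_diff)
  then show ?thesis
    unfolding scaled_term_def pochhammer_Suc by (simp only: ac_simps)
qed

lemma sum_telescoping_from_0:
  fixes g r :: "nat \<Rightarrow> 'a::ab_group_add"
  assumes "g 0 = r 0" and "\<And>n. n < M \<Longrightarrow> g (Suc n) = r (Suc n) - r n"
  shows "(\<Sum>n=0..M. g n) = r M"
  using assms by (induction M) auto

definition scaled_sum :: "nat \<Rightarrow> nat \<Rightarrow> 'a::field_char_0 \<Rightarrow> 'a" where
  "scaled_sum N k x = (\<Sum>n=0..N. scaled_term N k x n)"

lemma scaled_sum_Suc_param:
  "(1 + x/2 + of_nat k) * scaled_sum N (Suc k) x
     = (of_nat k + 1) * (1 + x + of_nat N + of_nat k) * (1 + x/2 + of_nat N + of_nat k) * scaled_sum N k x"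
proof -
  define a where "a = scaled_term N k x"
  \<comment> \<open>\<open>a n * p n\<close> is the summand of the recurrence; it telescopes with
      antidifference \<open>a n * c n\<close>, and \<open>c N = 0\<close>.\<close>
  define p where "p n = (1 + x/2 + of_nat k) * (of_nat N + of_nat k + 1 - of_nat n) * (1 + x + of_nat N + of_nat n + of_nat k)
     - (of_nat k + 1) * (1 + x + of_nat N + of_nat k) * (1 + x/2 + of_nat N + of_nat k)" for n
  define c where "c n = (of_nat N - of_nat n) * (x + of_nat n) * (x + of_nat N + of_nat n + 1 + of_nat k) / 2" for n
  have "(\<Sum>n=0..N. a n * p n) = a N * c N"
  proof (rule sum_telescoping_from_0)
    show "a 0 * p 0 = a 0 * c 0"
      unfolding p_def c_def by (simp add: field_simps)
    fix n assume "n < N"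
    have "c (Suc n) - p (Suc n) = of_nat (Suc n) * (of_nat N + of_nat k - of_nat n) * (x + of_nat N + of_nat n + 1) / 2"
      unfolding p_def c_def by (simp add: field_simps)
    then have "a n * c n = a (Suc n) * (c (Suc n) - p (Suc n))"
      using scaled_term_Suc_index[OF \<open>n < N\<close>, of k x] unfolding a_def c_def by (simp add: mult.assoc)
    then show "a (Suc n) * p (Suc n) = a (Suc n) * c (Suc n) - a n * c n"
      by (simp add: algebra_simps)
  qed
  also have "\<dots> = 0"
    unfolding c_def by simp
  finally have "(\<Sum>n=0..N. a n * p n) = 0" .
  moreover have "a n * p n = (1 + x/2 + of_nat k) * scaled_term N (Suc k) x n
      - (of_nat k + 1) * (1 + x + of_nat N + of_nat k) * (1 + x/2 + of_nat N + of_nat k) * a n"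
    if "n \<in> {0..N}" for n
    using that unfolding a_def p_def scaled_term_Suc_param[OF that[simplified]] by (simp add: field_simps)
  then have "(\<Sum>n=0..N. a n * p n) = (1 + x/2 + of_nat k) * scaled_sum N (Suc k) x
      - (of_nat k + 1) * (1 + x + of_nat N + of_nat k) * (1 + x/2 + of_nat N + of_nat k) * scaled_sum N k x"
    unfolding scaled_sum_def a_def sum_distrib_left sum_subtractf[symmetric] by (rule sum.cong[OF refl])
  ultimately show ?thesis
    by simp
qed

lemma scaled_sum_0: "scaled_sum N 0 x = pochhammer (1 + x) N"
proof -
  have "scaled_term N 0 x n = fact N * (pochhammer x n / fact n)" if "n \<le> N" for n
    unfolding scaled_term_def binomial_fact[OF that] by (simp add: field_simps)
  then have "scaled_sum N 0 x = fact N * (\<Sum>n=0..N. pochhammer x n / fact n)"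
    unfolding scaled_sum_def sum_distrib_left by (intro sum.cong) auto
  then show ?thesis
    by (simp add: sum_pochhammer_div_fact add.commute)
qed

lemma scaled_sum_closed_form:
  "scaled_sum N k x * pochhammer (1 + x/2) k
     = fact k * pochhammer (1 + x) (N + k) * pochhammer (1 + x/2 + of_nat N) k"
proof (induction k)
  case 0
  then show ?case by (simp add: scaled_sum_0)
next
  case (Suc k)
  have "scaled_sum N (Suc k) x * pochhammer (1 + x/2) (Suc k)
      = ((1 + x/2 + of_nat k) * scaled_sum N (Suc k) x) * pochhammer (1 + x/2) k"
    by (simp add: pochhammer_Suc algebra_simps)
  also have "\<dots> = (of_nat k + 1) * (1 + x + of_nat N + of_nat k) * (1 + x/2 + of_nat N + of_nat k)
      * (scaled_sum N k x * pochhammer (1 + x/2) k)"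
    unfolding scaled_sum_Suc_param by (simp only: ac_simps)
  also have "\<dots> = fact (Suc k) * pochhammer (1 + x) (N + Suc k) * pochhammer (1 + x/2 + of_nat N) (Suc k)"
    unfolding Suc.IH by (simp add: pochhammer_Suc algebra_simps)
  finally show ?case .
qed

lemma hypergeometric_term_eq_scaled_term:
  fixes x :: "'a::field_char_0"
  assumes "n \<le> N" and "1 + x + of_nat N \<notin> \<int>\<^sub>\<le>\<^sub>0"
  shows "pochhammer (- of_nat N) n * pochhammer x n * pochhammer (1 + x + of_nat N + of_nat k) n
          / (pochhammer (- of_nat N - of_nat k) n * pochhammer (1 + x + of_nat N) n * fact n)
       = scaled_term N k x n / (fact (N + k) * pochhammer (1 + x + of_nat N) k)"
proof -
  define y where "y = 1 + x + of_nat N"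
  have nonzero: "pochhammer y j \<noteq> 0" for j
    using assms(2) unfolding y_def by (auto simp: pochhammer_eq_0_iff)
  have shifted: "pochhammer (y + of_nat k) n = pochhammer y n * pochhammer (y + of_nat n) k / pochhammer y k"
    using pochhammer_product_swap[of y k n] nonzero by (simp add: field_simps)
  have lower: "pochhammer (- of_nat N - of_nat k) n = (- 1) ^ n * fact (N + k) / (fact (N + k - n) :: 'a)"
    using pochhammer_minus_of_nat[of n "N + k"] assms(1) by simp
  show ?thesis
    using nonzero
    unfolding scaled_term_def y_def[symmetric] shifted lower
      pochhammer_minus_of_nat[OF assms(1)] binomial_fact[OF assms(1)]
    by (simp add: field_simps)
qed

lemma one_plus_half_notin_nonpos_Ints:
  assumes "(x :: 'a::field_char_0) \<notin> \<int>\<^sub>\<le>\<^sub>0"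
  shows "1 + x / 2 \<notin> \<int>\<^sub>\<le>\<^sub>0"
proof
  assume "1 + x / 2 \<in> \<int>\<^sub>\<le>\<^sub>0"
  then obtain i where "1 + x / 2 = - of_nat i"
    by (auto elim!: nonpos_Ints_cases')
  have "x = 2 * (1 + x / 2) - 2"
    by simp
  also have "\<dots> = - of_nat (2 * i + 2)"
    unfolding \<open>1 + x / 2 = - of_nat i\<close> by simp
  finally show False
    using assms by (metis minus_of_nat_in_nonpos_Ints)
qed

lemma hyp3F2_trunc_summation:
  fixes x :: complex
  assumes "x \<notin> \<int>\<^sub>\<le>\<^sub>0" and "1 + x + of_nat N \<notin> \<int>\<^sub>\<le>\<^sub>0"
  shows "hyp3F2_trunc (- of_nat N) x (1 + x + of_nat N + of_nat k) (- of_nat N - of_nat k) (1 + x + of_nat N) 1 N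
       = pochhammer (1 + x) N * pochhammer (1 + x / 2 + of_nat k) N
         / (pochhammer (1 + x / 2) N * pochhammer (1 + of_nat k) N)"
proof -
  have nonzero: "pochhammer (1 + x / 2) j \<noteq> 0" "pochhammer (1 + x + of_nat N) j \<noteq> 0" for j
    using one_plus_half_notin_nonpos_Ints[OF assms(1)] assms(2) by (auto simp: pochhammer_eq_0_iff)
  have "hyp3F2_trunc (- of_nat N) x (1 + x + of_nat N + of_nat k) (- of_nat N - of_nat k) (1 + x + of_nat N) 1 N
      = scaled_sum N k x / (fact (N + k) * pochhammer (1 + x + of_nat N) k)"
    unfolding hyp3F2_trunc_def scaled_sum_def sum_divide_distrib
    using hypergeometric_term_eq_scaled_term[OF _ assms(2)] by (intro sum.cong) auto
  also have "\<dots> = fact k * pochhammer (1 + x) N * pochhammer (1 + x / 2 + of_nat N) k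
      / (fact (N + k) * pochhammer (1 + x / 2) k)"
    using scaled_sum_closed_form[of N k x] nonzero
    by (simp add: pochhammer_product' add.assoc field_simps)
  also have "\<dots> = pochhammer (1 + x) N * pochhammer (1 + x / 2 + of_nat k) N
         / (pochhammer (1 + x / 2) N * pochhammer (1 + of_nat k) N)"
  proof -
    have shifted: "pochhammer (1 + x / 2 + of_nat k) N
        = pochhammer (1 + x / 2) N * pochhammer (1 + x / 2 + of_nat N) k / pochhammer (1 + x / 2) k"
      using pochhammer_product_swap[of "1 + x / 2" k N] nonzero by (simp add: field_simps)
    have rising_fact: "pochhammer (1 + of_nat k) N = (fact (N + k) / fact k :: complex)"
      using fact_mult_pochhammer_of_nat[of k N] by (simp add: field_simps add.commute)
    show ?thesis
      unfolding shifted rising_fact using nonzero by (simp add: field_simps)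
  qed
  finally show ?thesis .
qed

theorem mainTheorem14:
  fixes m k :: nat and \<alpha> :: complex
  assumes "m \<ge> 1" and "k \<ge> 1"
    and "\<alpha> \<notin> \<int>\<^sub>\<le>\<^sub>0"
    and "1 + \<alpha> + 2 * of_nat m + of_nat k \<notin> \<int>\<^sub>\<le>\<^sub>0"
    and "1 + \<alpha> + 2 * of_nat m \<notin> \<int>\<^sub>\<le>\<^sub>0"
  shows "hyp3F2_trunc (- 2 * of_nat m) \<alpha> (1 + \<alpha> + 2 * of_nat m + of_nat k)
            (- 2 * of_nat m - of_nat k) (1 + \<alpha> + 2 * of_nat m) 1 (2 * m)
       = pochhammer (1 + \<alpha>) (2 * m) * pochhammer (1 + \<alpha> / 2 + of_nat k) (2 * m)
         / (pochhammer (1 + \<alpha> / 2) (2 * m) * pochhammer (1 + of_nat k) (2 * m))"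
  using hyp3F2_trunc_summation[OF assms(3), of "2 * m" k] assms(5) by simp

end
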